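(* Let $I_n:=\iint_T \frac{(-\ln xy)^n}{xy}\,dx\,dy$. The series $\sum_{n=0}^\infty(-1)^n\frac{I_n}{n!}$ diverges, but it is Abel summable to $1/2$, i.e. $\lim_{t\to1^-}\sum_{n=0}^\infty(-1)^n\frac{I_n}{n!}t^n=\frac12$.
   Context: $T:=\{(x,y)\in[0,1]^2 : x+y\ge 1\}$. *)

theory Defs
  imports "HOL-Analysis.Analysis"
begin

definition T_region :: "(real \<times> real) set" where
  "T_region = {(x, y). 0 \<le> x \<and> x \<le> 1 \<and> 0 \<le> y \<and> y \<le> 1 \<and> x + y \<ge> 1}"

definition I_int :: "nat \<Rightarrow> real" where
  "I_int n = (LINT p:T_region|lborel. (- ln (fst p * snd p)) ^ n / (fst p * snd p))"

end

theory Submission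
  imports Defs
begin

text \<open>
  Expanding $(xy)^{-s} = e^{-s \ln(xy)}$ in
  its exponential series and integrating term by term (dominated convergence; the dominating
  function $(xy)^{-(|s|+1)}$ is integrable over $T$ because $|s| + 1 < 2$) gives the generating
  function $\sum_n I_n s^n/n! = \iint_T (xy)^{-(s+1)}$ for $|s| < 1$.

  \<^item> With $s = -t$ the Abel means are $\iint_T (xy)^{t-1}$.  Since
    $|(xy)^{t-1} - 1| \le 2(1-t)/(xy)$ on $T$ (up to two corner points), they differ from the
    area $1/2$ of $T$ by at most $2(1-t) I_0$, which tends to $0$ as $t \to 1^-$.
  \<^item> With $s = t > 0$ the generating function is at least $\frac{(1/2)^{1-t}}{1-t}$, from the
    part of $T$ below $y = 1/2$.  If $\sum (-1)^n I_n/n!$ converged, then $I_n/n! \to 0$, which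
    forces the generating function to be $o(1/(1-t))$ -- a contradiction.
\<close>

lemma nn_integral_powr_interval:
  fixes a b :: real
  assumes "a > -1" "b \<ge> 0"
  shows "(\<integral>\<^sup>+y. indicator {0..b} y * ennreal (y powr a) \<partial>lborel) = ennreal (b powr (a + 1) / (a + 1))"
  using nn_integral_has_integral_lebesgue'[OF _ has_integral_powr_from_0[OF assms]]
  by (simp add: mult.commute)

lemma sums_integral_dominated:
  fixes h :: "nat \<Rightarrow> 'a \<Rightarrow> 'b::{banach, second_countable_topology}"
  assumes h_integrable: "\<And>n. integrable M (h n)" and "integrable M w"
    and series: "\<And>x. (\<lambda>n. h n x) sums S x" and norm_series: "\<And>x. (\<lambda>n. norm (h n x)) sums w x"
    and "S \<in> borel_measurable M"
  shows "(\<lambda>n. integral\<^sup>L M (h n)) sums integral\<^sup>L M S"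
proof -
  have "(\<lambda>N. integral\<^sup>L M (\<lambda>x. \<Sum>n<N. h n x)) \<longlonglongrightarrow> integral\<^sup>L M S"
  proof (rule integral_dominated_convergence[where w = w])
    show "\<And>N. (\<lambda>x. \<Sum>n<N. h n x) \<in> borel_measurable M"
      using h_integrable by measurable
    show "AE x in M. (\<lambda>N. \<Sum>n<N. h n x) \<longlonglongrightarrow> S x"
      using series by (simp add: sums_def)
    show "AE x in M. norm (\<Sum>n<N. h n x) \<le> w x" for N
    proof (intro AE_I2)
      fix x
      have "norm (\<Sum>n<N. h n x) \<le> (\<Sum>n<N. norm (h n x))"
        by (rule norm_sum)
      also have "\<dots> \<le> (\<Sum>n. norm (h n x))"
        using norm_series[of x] by (intro sum_le_suminf) (auto simp: sums_iff)
      also have "\<dots> = w x"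
        using norm_series[of x] by (simp add: sums_iff)
      finally show "norm (\<Sum>n<N. h n x) \<le> w x" .
    qed
  qed fact+
  then show ?thesis
    using h_integrable by (simp add: sums_def)
qed

lemma exp_mult_minus_one_le:
  fixes L e :: real
  assumes L: "0 \<le> L" and e: "0 \<le> e" "e \<le> 1/2"
  shows "exp (e * L) - 1 \<le> 2 * e * exp L"
proof -
  have "exp (e * L) * (1 - e * L) \<le> exp (e * L) * exp (- (e * L))"
    using exp_ge_add_one_self[of "- (e * L)"] by (intro mult_left_mono) auto
  then have tangent_bound: "exp (e * L) - 1 \<le> e * L * exp (e * L)"
    by (simp add: exp_minus algebra_simps)
  have "L * e \<le> L * (1/2)"
    using L e by (intro mult_left_mono) auto
  then have "L / 2 \<le> (1 - e) * L"
    by (simp add: algebra_simps)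
  also have "\<dots> \<le> exp ((1 - e) * L)"
    using exp_ge_add_one_self[of "(1 - e) * L"] by linarith
  finally have "e * L * exp (e * L) \<le> e * (2 * exp ((1 - e) * L)) * exp (e * L)"
    using e by (intro mult_right_mono mult_left_mono) auto
  also have "\<dots> = 2 * e * exp L"
    by (simp add: exp_add[symmetric] algebra_simps)
  finally show ?thesis
    using tangent_bound by linarith
qed

lemma power_series_le_of_small_tail:
  fixes b :: "nat \<Rightarrow> real"
  assumes b_nonneg: "\<And>n. 0 \<le> b n" and b_small: "\<And>n. N \<le> n \<Longrightarrow> b n \<le> \<epsilon>"
    and t: "0 \<le> t" "t < 1" and summable: "summable (\<lambda>n. b n * t ^ n)"
  shows "(\<Sum>n. b n * t ^ n) \<le> (\<Sum>n<N. b n) + \<epsilon> / (1 - t)"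
proof -
  have geometric: "(\<lambda>n. \<epsilon> * t ^ n) sums (\<epsilon> / (1 - t))"
    using geometric_sums[of t] t by (simp add: sums_mult divide_inverse)
  have "(\<Sum>n. b (n + N) * t ^ (n + N)) \<le> (\<Sum>n. \<epsilon> * t ^ n)"
  proof (rule suminf_le)
    show "b (n + N) * t ^ (n + N) \<le> \<epsilon> * t ^ n" for n
      using b_nonneg[of "n + N"] b_small[of "n + N"] t
      by (intro mult_mono power_decreasing) auto
    show "summable (\<lambda>n. b (n + N) * t ^ (n + N))"
      using summable_ignore_initial_segment[OF summable, of N] by simp
    show "summable (\<lambda>n. \<epsilon> * t ^ n)"
      using geometric by (rule sums_summable)
  qed
  moreover have "(\<Sum>n<N. b n * t ^ n) \<le> (\<Sum>n<N. b n)"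
    using b_nonneg t by (intro sum_mono mult_left_le power_le_one) auto
  ultimately show ?thesis
    using suminf_split_initial_segment[OF summable, of N] sums_unique[OF geometric] by linarith
qed

lemma T_region_closed: "closed T_region"
proof -
  have "T_region = {p. 0 \<le> fst p} \<inter> {p. fst p \<le> 1} \<inter> {p. 0 \<le> snd p} \<inter> {p. snd p \<le> 1}
      \<inter> {p. 1 \<le> fst p + snd p}"
    by (auto simp: T_region_def)
  also have "closed \<dots>"
    by (intro closed_Int closed_Collect_le continuous_intros)
  finally show ?thesis .
qed

lemma T_region_borel [measurable]: "T_region \<in> sets borel"
  using T_region_closed by simp

lemma T_region_pair_measurable [measurable]: "T_region \<in> sets (lborel \<Otimes>\<^sub>M lborel)"
  unfolding lborel_prod by simp

lemma T_region_swap: "(y, x) \<in> T_region \<longleftrightarrow> (x, y) \<in> T_region"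
  by (auto simp: T_region_def)

lemma T_region_prod_bounds:
  assumes "p \<in> T_region"
  shows "0 \<le> fst p * snd p" "fst p * snd p \<le> 1" "0 \<le> - ln (fst p * snd p)"
proof -
  show u0: "0 \<le> fst p * snd p" and u1: "fst p * snd p \<le> 1"
    using assms by (auto simp: T_region_def mult_le_one)
  have "ln u \<le> 0" if "0 \<le> u" "u \<le> 1" for u :: real
    using that by (cases "u = 0") auto
  from this[OF u0 u1] show "0 \<le> - ln (fst p * snd p)" by simp
qed

text \<open>Integrating a function of $y$ over $T$: the horizontal section of $T$ at height
  $y \in [0,1]$ is $[1-y,1]$, of length $y$.\<close>
lemma nn_integral_T_region_snd:
  fixes g :: "real \<Rightarrow> ennreal"
  assumes [measurable]: "g \<in> borel_measurable borel"
  shows "(\<integral>\<^sup>+p. indicator T_region p * g (snd p) \<partial>lborel) = (\<integral>\<^sup>+y. indicator {0..1} y * ennreal y * g y \<partial>lborel)"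
proof -
  have "(\<integral>\<^sup>+p. indicator T_region p * g (snd p) \<partial>lborel)
      = (\<integral>\<^sup>+y. (\<integral>\<^sup>+x. indicator T_region (x, y) * g y \<partial>lborel) \<partial>lborel)"
    unfolding lborel_prod[symmetric] by (subst lborel_pair.nn_integral_snd[symmetric]) simp_all
  also have "\<dots> = (\<integral>\<^sup>+y. indicator {0..1} y * ennreal y * g y \<partial>lborel)"
  proof (rule nn_integral_cong)
    fix y :: real
    have "\<And>x. indicator T_region (x, y) * g y = g y * indicator {0..1} y * indicator {1 - y..1} x"
      by (auto simp: T_region_def indicator_def)
    then have "(\<integral>\<^sup>+x. indicator T_region (x, y) * g y \<partial>lborel) = g y * indicator {0..1} y * emeasure lborel {1 - y..1}"
      by (simp add: nn_integral_cmult)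
    also have "\<dots> = indicator {0..1} y * ennreal y * g y"
      by (cases "0 \<le> y \<and> y \<le> 1") (auto simp: indicator_def mult.commute)
    finally show "(\<integral>\<^sup>+x. indicator T_region (x, y) * g y \<partial>lborel) = indicator {0..1} y * ennreal y * g y" .
  qed
  finally show ?thesis .
qed

text \<open>By the symmetry of $T$, a function of $x$ has the same integral over $T$ as the
  same function of $y$.\<close>
lemma nn_integral_T_region_fst:
  fixes g :: "real \<Rightarrow> ennreal"
  assumes [measurable]: "g \<in> borel_measurable borel"
  shows "(\<integral>\<^sup>+p. indicator T_region p * g (fst p) \<partial>lborel) = (\<integral>\<^sup>+p. indicator T_region p * g (snd p) \<partial>lborel)"
proof -
  have "(\<integral>\<^sup>+p. indicator T_region p * g (fst p) \<partial>lborel)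
      = (\<integral>\<^sup>+p. indicator T_region p * g (fst p) \<partial>(lborel \<Otimes>\<^sub>M lborel))"
    by (simp add: lborel_prod)
  also have "\<dots> = (\<integral>\<^sup>+p. indicator T_region p * g (fst p)
      \<partial>distr (lborel \<Otimes>\<^sub>M lborel) (lborel \<Otimes>\<^sub>M lborel) (\<lambda>(x, y). (y, x)))"
    by (simp only: lborel_pair.distr_pair_swap[symmetric])
  also have "\<dots> = (\<integral>\<^sup>+p. indicator T_region (case p of (x, y) \<Rightarrow> (y, x)) * g (snd p) \<partial>(lborel \<Otimes>\<^sub>M lborel))"
    by (subst nn_integral_distr) (measurable, simp add: case_prod_beta)
  also have "\<dots> = (\<integral>\<^sup>+p. indicator T_region p * g (snd p) \<partial>lborel)"
    by (simp add: lborel_prod case_prod_beta indicator_def T_region_swap)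
  finally show ?thesis .
qed

text \<open>The area of $T$ is $1/2$; this is the Abel sum.\<close>
lemma emeasure_T_region: "emeasure lborel T_region = ennreal (1/2)"
proof -
  have "emeasure lborel T_region = (\<integral>\<^sup>+p. indicator T_region p * (\<lambda>_. 1) (snd p) \<partial>lborel)"
    by simp
  also have "\<dots> = (\<integral>\<^sup>+y. indicator {0..1} y * ennreal (y powr 1) \<partial>lborel)"
    by (subst nn_integral_T_region_snd) (auto intro!: nn_integral_cong simp: indicator_def)
  also have "\<dots> = ennreal (1/2)"
    by (subst nn_integral_powr_interval) auto
  finally show ?thesis .
qed

lemma nn_integral_T_region_snd_powr:
  fixes a c :: real
  assumes "a < 2" "0 \<le> c" "c \<le> 1"
  shows "(\<integral>\<^sup>+p. indicator T_region p * (indicator {..c} (snd p) * ennreal (snd p powr (-a))) \<partial>lborel)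
    = ennreal (c powr (2 - a) / (2 - a))"
proof -
  have "(\<integral>\<^sup>+p. indicator T_region p * (indicator {..c} (snd p) * ennreal (snd p powr (-a))) \<partial>lborel)
      = (\<integral>\<^sup>+y. indicator {0..1} y * ennreal y * (indicator {..c} y * ennreal (y powr (-a))) \<partial>lborel)"
    by (rule nn_integral_T_region_snd) measurable
  also have "\<dots> = (\<integral>\<^sup>+y. indicator {0..c} y * ennreal (y powr (1 - a)) \<partial>lborel)"
  proof (rule nn_integral_cong)
    fix y :: real
    show "indicator {0..1} y * ennreal y * (indicator {..c} y * ennreal (y powr (-a)))
        = indicator {0..c} y * ennreal (y powr (1 - a))"
    proof (cases "0 < y \<and> y \<le> c")
      case True
      then have "y * y powr (-a) = y powr (1 - a)"
        using powr_add[of y 1 "-a"] by simp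
      then show ?thesis
        using True assms by (simp add: indicator_def ennreal_mult[symmetric])
    qed (auto simp: indicator_def)
  qed
  also have "\<dots> = ennreal (c powr (2 - a) / (2 - a))"
    using nn_integral_powr_interval[of "1 - a" c] assms by simp
  finally show ?thesis .
qed

lemma integrable_T_region_snd_powr:
  fixes a :: real
  assumes "a < 2"
  shows "integrable lborel (\<lambda>p. indicator T_region p * snd p powr (-a))"
proof (rule integrableI_nonneg)
  show "(\<lambda>p. indicator T_region p * snd p powr (-a)) \<in> borel_measurable lborel"
    unfolding lborel_prod[symmetric] by measurable
  have "(\<integral>\<^sup>+p. ennreal (indicator T_region p * snd p powr (-a)) \<partial>lborel)
      = (\<integral>\<^sup>+p. indicator T_region p * (indicator {..1} (snd p) * ennreal (snd p powr (-a))) \<partial>lborel)"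
    by (intro nn_integral_cong) (auto simp: indicator_def T_region_def)
  also have "\<dots> < \<infinity>"
    using assms by (simp add: nn_integral_T_region_snd_powr)
  finally show "(\<integral>\<^sup>+p. ennreal (indicator T_region p * snd p powr (-a)) \<partial>lborel) < \<infinity>" .
qed simp

lemma integrable_T_region_fst:
  fixes f :: "real \<Rightarrow> real"
  assumes [measurable]: "f \<in> borel_measurable borel"
    and snd_integrable: "integrable lborel (\<lambda>p. indicator T_region p * f (snd p))"
  shows "integrable lborel (\<lambda>p. indicator T_region p * f (fst p))"
proof -
  have norm_eq: "ennreal (norm (indicator T_region p * f (h p))) = indicator T_region p * ennreal (norm (f (h p)))"
    for h :: "real \<times> real \<Rightarrow> real" and p
    by (simp add: indicator_def)
  have "(\<integral>\<^sup>+p. ennreal (norm (indicator T_region p * f (fst p))) \<partial>lborel)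
      = (\<integral>\<^sup>+p. ennreal (norm (indicator T_region p * f (snd p))) \<partial>lborel)"
    unfolding norm_eq by (rule nn_integral_T_region_fst) measurable
  also have "\<dots> < \<infinity>"
    using snd_integrable by (simp add: integrable_iff_bounded)
  finally show ?thesis
    by (subst integrable_iff_bounded) (simp add: lborel_prod[symmetric])
qed

text \<open>The integrand $(xy)^{-a}$ on $T$; the generating function of the $I_n$ is its integral.\<close>
definition T_powr :: "real \<Rightarrow> real \<times> real \<Rightarrow> real" where
  "T_powr a p = indicator T_region p * (fst p * snd p) powr (-a)"

lemma T_powr_measurable: "T_powr a \<in> borel_measurable lborel"
  unfolding T_powr_def lborel_prod[symmetric] by measurable

lemma T_powr_nonneg: "0 \<le> T_powr a p"
  by (simp add: T_powr_def)

text \<open>On $T$ one of $x,y$ is at least $1/2$, so $xy \ge \min(x,y)/2$ and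
  $(xy)^{-a} \le 2^a (x^{-a} + y^{-a})$ for $a \ge 0$.\<close>
lemma T_powr_le_coord_powr:
  fixes a :: real
  assumes "0 \<le> a"
  shows "T_powr a p \<le> 2 powr a * (indicator T_region p * fst p powr (-a) + indicator T_region p * snd p powr (-a))"
proof (cases "p \<in> T_region \<and> fst p * snd p \<noteq> 0")
  case False
  then show ?thesis
    by (auto simp: T_powr_def intro!: mult_nonneg_nonneg add_nonneg_nonneg)
next
  case True
  obtain x y where p: "p = (x, y)" by (cases p)
  with True have x: "0 < x" "x \<le> 1" and y: "0 < y" "y \<le> 1" and sum: "1 \<le> x + y"
    by (auto simp: T_region_def less_le)
  have half: "(u / 2) powr (-a) = 2 powr a * u powr (-a)" if "0 \<le> u" for u :: real
    using that by (simp add: powr_divide powr_minus_divide)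
  have "(x * y) powr (-a) \<le> 2 powr a * x powr (-a) + 2 powr a * y powr (-a)"
  proof (cases "y \<le> x")
    case True
    then have "1 / 2 \<le> x" using sum by linarith
    then have "y / 2 \<le> x * y" using mult_right_mono[of "1/2" x y] y by simp
    then have "(x * y) powr (-a) \<le> (y / 2) powr (-a)"
      using assms y by (intro powr_mono2') auto
    then show ?thesis using half[of y] y by (simp add: add_increasing)
  next
    case False
    then have "1 / 2 \<le> y" using sum by linarith
    then have "x / 2 \<le> x * y" using mult_left_mono[of "1/2" y x] x by simp
    then have "(x * y) powr (-a) \<le> (x / 2) powr (-a)"
      using assms x by (intro powr_mono2') auto
    then show ?thesis using half[of x] x by (simp add: add_increasing2)
  qed
  then show ?thesis
    using True p by (simp add: T_powr_def distrib_left)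
qed

lemma integrable_T_powr:
  fixes a :: real
  assumes "0 \<le> a" "a < 2"
  shows "integrable lborel (T_powr a)"
proof (rule Bochner_Integration.integrable_bound)
  have snd_int: "integrable lborel (\<lambda>p. indicator T_region p * snd p powr (-a))"
    using assms(2) by (rule integrable_T_region_snd_powr)
  moreover have "integrable lborel (\<lambda>p. indicator T_region p * fst p powr (-a))"
    using snd_int by (rule integrable_T_region_fst[of "\<lambda>y. y powr (-a)", rotated]) measurable
  ultimately show "integrable lborel
      (\<lambda>p. 2 powr a * (indicator T_region p * fst p powr (-a) + indicator T_region p * snd p powr (-a)))"
    by (intro integrable_mult_right Bochner_Integration.integrable_add)
  show "AE p in lborel. norm (T_powr a p)
      \<le> norm (2 powr a * (indicator T_region p * fst p powr (-a) + indicator T_region p * snd p powr (-a)))"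
    using T_powr_le_coord_powr[OF assms(1)] T_powr_nonneg by (intro AE_I2) (simp add: order_trans[OF _ abs_ge_self])
qed (rule T_powr_measurable)

text \<open>Lower bound by the part of $T$ with $y \le 1/2$, where $x \le 1$ gives
  $(xy)^{-a} \ge y^{-a}$; it blows up like $1/(2-a)$ as $a \to 2$.\<close>
lemma integral_T_powr_lower:
  fixes a :: real
  assumes "0 \<le> a" "a < 2"
  shows "(1/2) powr (2 - a) / (2 - a) \<le> integral\<^sup>L lborel (T_powr a)"
proof -
  have "ennreal ((1/2) powr (2 - a) / (2 - a))
      = (\<integral>\<^sup>+p. indicator T_region p * (indicator {..1/2} (snd p) * ennreal (snd p powr (-a))) \<partial>lborel)"
    using assms by (simp add: nn_integral_T_region_snd_powr)
  also have "\<dots> \<le> (\<integral>\<^sup>+p. ennreal (T_powr a p) \<partial>lborel)"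
  proof (rule nn_integral_mono)
    fix p :: "real \<times> real"
    show "indicator T_region p * (indicator {..1/2} (snd p) * ennreal (snd p powr (-a))) \<le> ennreal (T_powr a p)"
    proof (cases "p \<in> T_region \<and> snd p \<le> 1/2 \<and> snd p \<noteq> 0")
      case True
      obtain x y where p: "p = (x, y)" by (cases p)
      with True have "x \<le> 1" "0 < y" "y \<le> 1/2" "1 \<le> x + y"
        by (auto simp: T_region_def less_le)
      then have "y powr (-a) \<le> (x * y) powr (-a)"
        using assms by (intro powr_mono2') (auto simp: mult_le_cancel_right1)
      then show ?thesis
        using True p by (simp add: T_powr_def ennreal_leI)
    qed (auto simp: indicator_def)
  qed
  also have "\<dots> = ennreal (integral\<^sup>L lborel (T_powr a))"
    using integrable_T_powr[OF assms] T_powr_nonneg by (intro nn_integral_eq_integral) auto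
  finally show ?thesis
    by (simp add: ennreal_le_iff integral_nonneg_AE T_powr_nonneg)
qed

definition I_integrand :: "nat \<Rightarrow> real \<times> real \<Rightarrow> real" where
  "I_integrand n p = indicator T_region p * ((- ln (fst p * snd p)) ^ n / (fst p * snd p))"

lemma I_int_eq_integral: "I_int n = integral\<^sup>L lborel (I_integrand n)"
  unfolding I_int_def set_lebesgue_integral_def I_integrand_def by simp

lemma I_integrand_nonneg: "0 \<le> I_integrand n p"
proof (cases "p \<in> T_region")
  case True
  then show ?thesis
    using T_region_prod_bounds[OF True] by (simp add: I_integrand_def)
qed (simp add: I_integrand_def)

lemma I_integrand_exp_series:
  fixes s :: real
  shows "(\<lambda>n. s ^ n / fact n * I_integrand n p) sums T_powr (s + 1) p"
proof (cases "p \<in> T_region \<and> fst p * snd p \<noteq> 0")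
  case False
  then show ?thesis
    by (auto simp: I_integrand_def T_powr_def sums_zero)
next
  case True
  define u where "u = fst p * snd p"
  have u: "0 < u"
    using True T_region_prod_bounds[of p] by (auto simp: u_def less_le)
  have "(\<lambda>n. (s * - ln u) ^ n /\<^sub>R fact n * (1 / u)) sums (exp (s * - ln u) * (1 / u))"
    by (intro sums_mult2 exp_converges)
  moreover have "(s * - ln u) ^ n /\<^sub>R fact n * (1 / u) = s ^ n / fact n * I_integrand n p" for n
    using True power_mult_distrib[of s "- ln u" n] by (simp add: I_integrand_def u_def[symmetric] power_mult_distrib divide_inverse)
  moreover have "exp (s * - ln u) * (1 / u) = T_powr (s + 1) p"
  proof -
    have "exp (s * - ln u) * (1 / u) = exp (s * - ln u) / exp (ln u)"
      using u by simp
    also have "\<dots> = exp (- (s + 1) * ln u)"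
      by (simp add: exp_diff[symmetric] algebra_simps)
    also have "\<dots> = T_powr (s + 1) p"
      using True u by (simp add: T_powr_def u_def[symmetric] powr_def)
    finally show ?thesis .
  qed
  ultimately show ?thesis
    by simp
qed

text \<open>A single term of the nonnegative series is bounded by its sum.\<close>
lemma I_integrand_le_T_powr:
  fixes t :: real
  assumes "0 \<le> t"
  shows "t ^ n / fact n * I_integrand n p \<le> T_powr (t + 1) p"
proof -
  have series: "(\<lambda>n. t ^ n / fact n * I_integrand n p) sums T_powr (t + 1) p"
    by (rule I_integrand_exp_series)
  have "(\<Sum>n\<in>{n}. t ^ n / fact n * I_integrand n p) \<le> (\<Sum>n. t ^ n / fact n * I_integrand n p)"
    using assms I_integrand_nonneg by (intro sum_le_suminf sums_summable[OF series]) auto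
  then show ?thesis
    using sums_unique[OF series] by simp
qed

text \<open>With $t = 1/2$: $(-\ln u)^n/u \le n!\,2^n\,u^{-3/2}$, so every $I_n$ is finite.\<close>
lemma integrable_I_integrand: "integrable lborel (I_integrand n)"
proof (rule Bochner_Integration.integrable_bound)
  show "integrable lborel (\<lambda>p. (fact n * 2 ^ n) * T_powr (3/2) p)"
    by (intro integrable_mult_right integrable_T_powr) auto
  show "I_integrand n \<in> borel_measurable lborel"
    unfolding I_integrand_def lborel_prod[symmetric] by measurable
  have "(1/2) ^ n / fact n * I_integrand n p \<le> T_powr (1/2 + 1) p" for p
    by (rule I_integrand_le_T_powr) simp
  then have "I_integrand n p \<le> (fact n * 2 ^ n) * T_powr (3/2) p" for p
    by (simp add: field_simps power_divide)
  then show "AE p in lborel. norm (I_integrand n p) \<le> norm ((fact n * 2 ^ n) * T_powr (3/2) p)"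
    using I_integrand_nonneg T_powr_nonneg by (intro AE_I2) (simp add: abs_mult)
qed

lemma I_int_nonneg: "0 \<le> I_int n"
  unfolding I_int_eq_integral by (intro integral_nonneg_AE AE_I2 I_integrand_nonneg)

text \<open>The generating function: $\sum_n I_n s^n/n! = \iint_T (xy)^{-(s+1)}$ for $|s| < 1$,
  by term-by-term integration dominated by $(xy)^{-(|s|+1)}$.\<close>
lemma generating_function:
  fixes s :: real
  assumes "\<bar>s\<bar> < 1"
  shows "(\<lambda>n. I_int n / fact n * s ^ n) sums integral\<^sup>L lborel (T_powr (s + 1))"
proof -
  have "(\<lambda>n. integral\<^sup>L lborel (\<lambda>p. s ^ n / fact n * I_integrand n p)) sums integral\<^sup>L lborel (T_powr (s + 1))"
  proof (rule sums_integral_dominated)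
    show "integrable lborel (T_powr (\<bar>s\<bar> + 1))"
      using assms by (intro integrable_T_powr) auto
    have "norm (s ^ n / fact n * I_integrand n p) = \<bar>s\<bar> ^ n / fact n * I_integrand n p" for n p
      using I_integrand_nonneg by (simp add: abs_mult power_abs)
    then show "(\<lambda>n. norm (s ^ n / fact n * I_integrand n p)) sums T_powr (\<bar>s\<bar> + 1) p" for p
      using I_integrand_exp_series[of "\<bar>s\<bar>" p] by simp
    show "integrable lborel (\<lambda>p. s ^ n / fact n * I_integrand n p)" for n
      by (intro integrable_mult_right integrable_I_integrand)
    show "(\<lambda>n. s ^ n / fact n * I_integrand n p) sums T_powr (s + 1) p" for p
      by (rule I_integrand_exp_series)
  qed (rule T_powr_measurable)
  then show ?thesis
    by (simp add: I_int_eq_integral mult_ac)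
qed

text \<open>Away from the two corners $(0,1)$ and $(1,0)$, where $xy = 0$, the integrand
  $(xy)^{t-1} = e^{(1-t)L}$ with $L = -\ln(xy)$ differs from $1$ by at most $2(1-t)/(xy)$.\<close>
lemma T_powr_near_indicator:
  fixes t :: real
  assumes t: "1/2 \<le> t" "t < 1" and corner: "p \<notin> {(0, 1), (1, 0)}"
  shows "\<bar>T_powr (1 - t) p - indicator T_region p\<bar> \<le> 2 * (1 - t) * I_integrand 0 p"
proof (cases "p \<in> T_region")
  case False
  then show ?thesis
    by (simp add: T_powr_def I_integrand_def)
next
  case True
  obtain x y where p: "p = (x, y)" by (cases p)
  have "x * y \<noteq> 0"
    using True corner by (auto simp: p T_region_def)
  moreover have "0 \<le> x * y"
    using T_region_prod_bounds(1)[OF True] by (simp add: p)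
  ultimately have u: "0 < x * y"
    by linarith
  define L where "L = - ln (x * y)"
  have L: "0 \<le> L"
    using T_region_prod_bounds(3)[OF True] by (simp add: p L_def)
  have "x \<noteq> 0" "y \<noteq> 0"
    using u by auto
  then have "T_powr (1 - t) p = exp ((1 - t) * L)"
    using True by (simp add: p T_powr_def L_def powr_def algebra_simps)
  moreover have "I_integrand 0 p = exp L"
    using True u by (simp add: p I_integrand_def L_def exp_minus divide_inverse)
  moreover have "1 \<le> exp ((1 - t) * L)"
    using L t by simp
  moreover have "exp ((1 - t) * L) - 1 \<le> 2 * (1 - t) * exp L"
    using L t by (intro exp_mult_minus_one_le) auto
  ultimately show ?thesis
    using True by simp
qed

lemma integral_T_powr_near_area:
  fixes t :: real
  assumes t: "1/2 \<le> t" "t < 1"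
  shows "\<bar>integral\<^sup>L lborel (T_powr (1 - t)) - 1/2\<bar> \<le> 2 * (1 - t) * I_int 0"
proof -
  have f_int: "integrable lborel (T_powr (1 - t))"
    using t by (intro integrable_T_powr) auto
  have T_int: "integrable lborel (indicator T_region :: real \<times> real \<Rightarrow> real)"
    by (intro integrable_real_indicator) (simp, metis emeasure_T_region ennreal_less_top infinity_ennreal_def)
  have "measure lborel T_region = 1/2"
    unfolding measure_def emeasure_T_region by (rule enn2real_ennreal) simp
  then have T_area: "integral\<^sup>L lborel (indicator T_region :: real \<times> real \<Rightarrow> real) = 1/2"
    by simp
  have corners_null: "{(0::real, 1::real), (1, 0)} \<in> null_sets lborel"
    by (simp add: null_sets_def emeasure_lborel_countable finite_imp_closed)
  have "\<bar>integral\<^sup>L lborel (T_powr (1 - t)) - 1/2\<bar>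
      = \<bar>integral\<^sup>L lborel (\<lambda>p. T_powr (1 - t) p - indicator T_region p)\<bar>"
    using f_int T_int T_area by simp
  also have "\<dots> \<le> integral\<^sup>L lborel (\<lambda>p. \<bar>T_powr (1 - t) p - indicator T_region p\<bar>)"
    using integral_norm_bound[of lborel "\<lambda>p. T_powr (1 - t) p - indicator T_region p"] by simp
  also have "\<dots> \<le> integral\<^sup>L lborel (\<lambda>p. 2 * (1 - t) * I_integrand 0 p)"
  proof (rule integral_mono_AE)
    show "AE p in lborel. \<bar>T_powr (1 - t) p - indicator T_region p\<bar> \<le> 2 * (1 - t) * I_integrand 0 p"
      using T_powr_near_indicator[OF t] by (intro AE_I'[OF corners_null]) auto
  qed (use f_int T_int integrable_I_integrand in auto)
  also have "\<dots> = 2 * (1 - t) * I_int 0"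
    by (simp add: I_int_eq_integral)
  finally show ?thesis .
qed

lemma integral_T_powr_tendsto_area:
  "((\<lambda>t. integral\<^sup>L lborel (T_powr (1 - t))) \<longlongrightarrow> 1/2) (at_left (1::real))"
proof -
  have "norm (integral\<^sup>L lborel (T_powr (1 - t)) - 1/2) \<le> 2 * (1 - t) * I_int 0"
    if "t \<in> {1/2<..<1}" for t :: real
    using integral_T_powr_near_area[of t] that by simp
  then have "eventually (\<lambda>t. norm (integral\<^sup>L lborel (T_powr (1 - t)) - 1/2) \<le> 2 * (1 - t) * I_int 0)
      (at_left (1::real))"
    using eventually_at_left_real[of "1/2" "1::real"] by (auto elim: eventually_mono)
  moreover have "((\<lambda>t. 2 * (1 - t) * I_int 0) \<longlongrightarrow> 2 * (1 - 1) * I_int 0) (at_left (1::real))"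
    by (intro tendsto_intros)
  then have "((\<lambda>t. 2 * (1 - t) * I_int 0) \<longlongrightarrow> 0) (at_left (1::real))"
    by simp
  ultimately have "((\<lambda>t. integral\<^sup>L lborel (T_powr (1 - t)) - 1/2) \<longlongrightarrow> 0) (at_left (1::real))"
    by (rule Lim_null_comparison)
  then show ?thesis
    by (rule LIM_zero_cancel)
qed

text \<open>Divergence: otherwise $I_n/n! \to 0$, and for $t$ close to $1$ the generating
  function at $t$ would be $o(1/(1-t))$, contradicting the lower bound $\frac{1/2}{1-t}$.\<close>
lemma I_int_series_divergent: "\<not> summable (\<lambda>n. (-1) ^ n * I_int n / fact n)"
proof
  assume "summable (\<lambda>n. (-1) ^ n * I_int n / fact n)"
  then have "(\<lambda>n. \<bar>(-1) ^ n * I_int n / fact n\<bar>) \<longlonglongrightarrow> 0"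
    by (intro tendsto_rabs_zero summable_LIMSEQ_zero)
  then have "(\<lambda>n. I_int n / fact n) \<longlonglongrightarrow> 0"
    using I_int_nonneg by (simp add: abs_mult power_abs)
  then have "eventually (\<lambda>n. I_int n / fact n < 1/4) sequentially"
    by (rule order_tendstoD) simp
  then obtain N where N: "\<forall>n\<ge>N. I_int n / fact n < 1/4"
    unfolding eventually_sequentially by blast
  define C where "C = (\<Sum>n<N. I_int n / fact n)"
  have "0 \<le> C"
    unfolding C_def using I_int_nonneg by (intro sum_nonneg) simp
  define t where "t = 1 - 1 / (4 * (C + 1))"
  have one_minus_t: "1 - t = 1 / (4 * (C + 1))" and t: "3/4 \<le> t" "t < 1"
    using \<open>0 \<le> C\<close> by (auto simp: t_def field_simps)
  have series: "(\<lambda>n. I_int n / fact n * t ^ n) sums integral\<^sup>L lborel (T_powr (t + 1))"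
    using t by (intro generating_function) auto
  have "(1/2) / (1 - t) \<le> (1/2) powr (1 - t) / (1 - t)"
    using t powr_mono'[of "1 - t" 1 "1/2"] by (intro divide_right_mono) auto
  also have "\<dots> \<le> integral\<^sup>L lborel (T_powr (t + 1))"
    using integral_T_powr_lower[of "t + 1"] t by simp
  also have "\<dots> = (\<Sum>n. I_int n / fact n * t ^ n)"
    using series by (simp add: sums_iff)
  also have "\<dots> \<le> C + (1/4) / (1 - t)"
    unfolding C_def
  proof (rule power_series_le_of_small_tail)
    show "0 \<le> I_int n / fact n" for n
      using I_int_nonneg[of n] by simp
    show "I_int n / fact n \<le> 1/4" if "N \<le> n" for n
      using N that by (simp add: less_imp_le)
    show "summable (\<lambda>n. I_int n / fact n * t ^ n)"
      using series by (rule sums_summable)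
  qed (use t in auto)
  finally have "(1/2) / (1 - t) \<le> C + (1/4) / (1 - t)" .
  moreover have "(1/2) / (1 - t) = 2 * (C + 1)" "(1/4) / (1 - t) = C + 1"
    unfolding one_minus_t by simp_all
  ultimately show False
    by linarith
qed

theorem corollary5:
  shows "\<not> summable (\<lambda>n. (-1) ^ n * I_int n / fact n) \<and>
    (\<forall>t\<in>{0<..<1::real}. summable (\<lambda>n. (-1) ^ n * I_int n / fact n * t ^ n)) \<and>
    ((\<lambda>t. \<Sum>n. (-1) ^ n * I_int n / fact n * t ^ n) \<longlongrightarrow> 1/2) (at_left (1::real))"
proof -
  have signed_series: "(\<lambda>n. (-1) ^ n * I_int n / fact n * t ^ n) sums integral\<^sup>L lborel (T_powr (1 - t))"
    if "t \<in> {0<..<1}" for t :: real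
  proof -
    have "(\<lambda>n. I_int n / fact n * (- t) ^ n) sums integral\<^sup>L lborel (T_powr (- t + 1))"
      using that by (intro generating_function) simp
    also have "(\<lambda>n. I_int n / fact n * (- t) ^ n) = (\<lambda>n. (-1) ^ n * I_int n / fact n * t ^ n)"
      by (simp add: fun_eq_iff power_minus[of t])
    also have "- t + 1 = 1 - t"
      by simp
    finally show ?thesis .
  qed
  have "((\<lambda>t. \<Sum>n. (-1) ^ n * I_int n / fact n * t ^ n) \<longlongrightarrow> 1/2) (at_left (1::real))"
  proof (rule Lim_transform_eventually[OF integral_T_powr_tendsto_area])
    show "eventually (\<lambda>t. integral\<^sup>L lborel (T_powr (1 - t)) = (\<Sum>n. (-1) ^ n * I_int n / fact n * t ^ n))
        (at_left (1::real))"
      using eventually_at_left_real[of 0 "1::real"] sums_unique[OF signed_series]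
      by (auto elim!: eventually_mono)
  qed
  then show ?thesis
    using I_int_series_divergent signed_series sums_summable by (intro conjI ballI) auto
qed

end
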